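(* Let $A$ be a $C^*$-algebra, $X$ a full Hilbert $A$-module, $H,K$ Hilbert spaces, $\Phi\in\mathcal{C}(X,L(H,K))$, and let $(\pi_\Phi,H_\Phi,K_\Phi,V_\Phi,W_\Phi)$ be the Stinespring construction associated to $\Phi$. If $T\oplus S\in\pi_\Phi(X)'$ is a positive element, then the map $\Phi_{T\oplus S}:X\to L(H,K)$ defined by $\Phi_{T\oplus S}(x)=W_\Phi^*\sqrt{S}\,\pi_\Phi(x)\sqrt{T}\,V_\Phi$ is completely positive.
   Context: A Hilbert $A$-module $X$ is a right $A$-module with an $A$-valued inner product $\langle\cdot,\cdot\rangle$ (conjugate linear in the first and $A$-linear in the second variable), complete in the norm $\|x\|=\|\langle x,x\rangle\|^{1/2}$; it is full if the closed two-sided ideal generated by $\{\langle x,y\rangle\}$ is $A$. $L(H,K)$ is the space of bounded operators $H\to K$. A map $\Phi:X\to L(H,K)$ is completely positive if there is a completely positive map $\varphi:A\to L(H)$ with $\Phi(x)^*\Phi(y)=\varphi(\langle x,y\rangle)$ for all $x,y\in X$; $\mathcal{C}(X,L(H,K))$ is the set of such maps. $[Y]$ denotes closed linear span and $p_M$ orthogonal projection onto $M$. A representation of $X$ on Hilbert spaces $H',K'$ is a map $\pi:X\to L(H',K')$ for which there is a $*$-representation $\pi_A$ of $A$ on $H'$ with $\pi(x)^*\pi(y)=\pi_A(\langle x,y\rangle)$. The Stinespring construction associated to $\Phi$ (with associated $\varphi$) is the quintuple $(\pi_\Phi,H_\Phi,K_\Phi,V_\Phi,W_\Phi)$ where: $\pi_\varphi$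 is a $*$-representation of $A$ on $H_\Phi$, $V_\Phi\in L(H,H_\Phi)$, $\varphi(a)=V_\Phi^*\pi_\varphi(a)V_\Phi$, $[\pi_\varphi(A)V_\Phi H]=H_\Phi$ (minimal Stinespring dilation of $\varphi$); $K_\Phi=[\Phi(X)H]\subseteq K$; $\pi_\Phi:X\to L(H_\Phi,K_\Phi)$ is the representation with underlying $*$-representation $\pi_\varphi$ determined by $\pi_\Phi(x)\pi_\varphi(a)V_\Phi h=\Phi(xa)h$; $W_\Phi\in L(K,K_\Phi)$ is the coisometry $W_\Phi k=p_{K_\Phi}k$. Then $\Phi(x)=W_\Phi^*\pi_\Phi(x)V_\Phi$. The commutant of a representation $\pi:X\to L(H',K')$ is the $C^*$-algebra $\pi(X)'=\{T\oplus S\in L(H'\oplus K'):\ \pi(x)T=S\pi(x)\text{ and }\pi(x)^*S=T\pi(x)^*\ \forall x\in X\}$. *)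

theory Defs
  imports "HOL-Analysis.Analysis"
begin

class scaleC = scaleR +
  fixes scaleC :: "complex \<Rightarrow> 'a \<Rightarrow> 'a" (infixr \<open>*\<^sub>C\<close> 75)
  assumes scaleR_scaleC: "scaleR r = scaleC (complex_of_real r)"

class complex_vector = scaleC + ab_group_add +
  assumes scaleC_add_right: "a *\<^sub>C (x + y) = a *\<^sub>C x + a *\<^sub>C y"
    and scaleC_add_left: "(a + b) *\<^sub>C x = a *\<^sub>C x + b *\<^sub>C x"
    and scaleC_scaleC: "a *\<^sub>C b *\<^sub>C x = (a * b) *\<^sub>C x"
    and scaleC_one: "1 *\<^sub>C x = x"

class complex_normed_vector = complex_vector + real_normed_vector +
  assumes norm_scaleC: "norm (a *\<^sub>C x) = cmod a * norm x"

class chilbert = complex_normed_vector + complete_space +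
  fixes cinner :: "'a \<Rightarrow> 'a \<Rightarrow> complex"
  assumes cinner_add_right: "cinner x (y + z) = cinner x y + cinner x z"
    and cinner_scaleC_right: "cinner x (c *\<^sub>C y) = c * cinner x y"
    and cinner_commute: "cinner x y = cnj (cinner y x)"
    and cinner_self_nonneg: "0 \<le> Re (cinner x x)"
    and cinner_self_eq_0: "cinner x x = 0 \<longleftrightarrow> x = 0"
    and norm_eq_sqrt_cinner: "norm x = sqrt (Re (cinner x x))"

text \<open>(Not necessarily unital) C*-algebra.\<close>
class cstar_algebra = complex_normed_vector + banach + ring +
  fixes cstar :: "'a \<Rightarrow> 'a"
  assumes cstar_cstar: "cstar (cstar a) = a"
    and cstar_add: "cstar (a + b) = cstar a + cstar b"
    and cstar_scaleC: "cstar (c *\<^sub>C a) = cnj c *\<^sub>C cstar a"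
    and cstar_mult: "cstar (a * b) = cstar b * cstar a"
    and scaleC_mult_left: "(c *\<^sub>C a) * b = c *\<^sub>C (a * b)"
    and scaleC_mult_right: "a * (c *\<^sub>C b) = c *\<^sub>C (a * b)"
    and norm_mult_ineq: "norm (a * b) \<le> norm a * norm b"
    and cstar_identity: "norm (cstar a * a) = norm a ^ 2"

definition cnonneg :: "complex \<Rightarrow> bool" where
  "cnonneg z \<longleftrightarrow> Im z = 0 \<and> 0 \<le> Re z"

definition clinear :: "('a::complex_vector \<Rightarrow> 'b::complex_vector) \<Rightarrow> bool" where
  "clinear f \<longleftrightarrow> (\<forall>x y. f (x + y) = f x + f y) \<and> (\<forall>c x. f (c *\<^sub>C x) = c *\<^sub>C f x)"

definition bounded_clinear :: "('a::complex_normed_vector \<Rightarrow> 'b::complex_normed_vector) \<Rightarrow> bool" where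
  "bounded_clinear f \<longleftrightarrow> clinear f \<and> (\<exists>B. \<forall>x. norm (f x) \<le> norm x * B)"

definition csubspace :: "'a::complex_vector set \<Rightarrow> bool" where
  "csubspace V \<longleftrightarrow> 0 \<in> V \<and> (\<forall>x\<in>V. \<forall>y\<in>V. x + y \<in> V) \<and> (\<forall>c. \<forall>x\<in>V. c *\<^sub>C x \<in> V)"

definition cspan :: "'a::complex_vector set \<Rightarrow> 'a set" where
  "cspan S = \<Inter>{V. csubspace V \<and> S \<subseteq> V}"

definition ccspan :: "'a::complex_normed_vector set \<Rightarrow> 'a set" where
  "ccspan S = closure (cspan S)"

definition cadj :: "('a::chilbert \<Rightarrow> 'b::chilbert) \<Rightarrow> ('b \<Rightarrow> 'a)" where
  "cadj T = (SOME S. \<forall>x y. cinner (T x) y = cinner x (S y))"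

definition op_pos :: "('a::chilbert \<Rightarrow> 'a) \<Rightarrow> bool" where
  "op_pos T \<longleftrightarrow> bounded_clinear T \<and> (\<forall>x. cnonneg (cinner x (T x)))"

definition op_sqrt :: "('a::chilbert \<Rightarrow> 'a) \<Rightarrow> ('a \<Rightarrow> 'a)" where
  "op_sqrt T = (THE R. op_pos R \<and> R \<circ> R = T)"

definition cproj :: "'a::chilbert set \<Rightarrow> 'a \<Rightarrow> 'a" where
  "cproj M k = (THE m. m \<in> M \<and> (\<forall>u\<in>M. cinner u (k - m) = 0))"

definition cpos :: "'a::cstar_algebra \<Rightarrow> bool" where
  "cpos a \<longleftrightarrow> (\<exists>b. a = cstar b * b)"

definition mat_pos :: "nat \<Rightarrow> (nat \<Rightarrow> nat \<Rightarrow> 'a::cstar_algebra) \<Rightarrow> bool" where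
  "mat_pos n M \<longleftrightarrow> (\<exists>B. \<forall>i<n. \<forall>j<n. M i j = (\<Sum>k<n. cstar (B k i) * B k j))"

text \<open>Completely positive map A \<rightarrow> L(H): linear, and every amplification
  M_n(A) \<rightarrow> M_n(L(H)) = L(H^n) maps positive matrices to positive operators.\<close>
definition cp_map :: "('a::cstar_algebra \<Rightarrow> 'h::chilbert \<Rightarrow> 'h) \<Rightarrow> bool" where
  "cp_map \<phi> \<longleftrightarrow> (\<forall>h. clinear (\<lambda>a. \<phi> a h)) \<and> (\<forall>a. bounded_clinear (\<phi> a)) \<and>
     (\<forall>n M. mat_pos n M \<longrightarrow>
        (\<forall>h::nat \<Rightarrow> 'h. cnonneg (\<Sum>i<n. \<Sum>j<n. cinner (h i) (\<phi> (M i j) (h j)))))"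

definition cideal :: "'a::cstar_algebra set \<Rightarrow> bool" where
  "cideal I \<longleftrightarrow> csubspace I \<and> (\<forall>a. \<forall>x\<in>I. a * x \<in> I \<and> x * a \<in> I)"

definition closed_ideal_hull :: "'a::cstar_algebra set \<Rightarrow> 'a set" where
  "closed_ideal_hull S = \<Inter>{I. cideal I \<and> closed I \<and> S \<subseteq> I}"

definition star_rep :: "('a::cstar_algebra \<Rightarrow> 'h::chilbert \<Rightarrow> 'h) \<Rightarrow> bool" where
  "star_rep \<pi> \<longleftrightarrow> (\<forall>h. clinear (\<lambda>a. \<pi> a h)) \<and> (\<forall>a. bounded_clinear (\<pi> a)) \<and>
     (\<forall>a b. \<pi> (a * b) = \<pi> a \<circ> \<pi> b) \<and> (\<forall>a. \<pi> (cstar a) = cadj (\<pi> a))"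

definition hnorm :: "('x \<Rightarrow> 'x \<Rightarrow> 'a::cstar_algebra) \<Rightarrow> 'x \<Rightarrow> real" where
  "hnorm hinner x = sqrt (norm (hinner x x))"

definition hilbert_module :: "('x::complex_vector \<Rightarrow> 'a::cstar_algebra \<Rightarrow> 'x) \<Rightarrow> ('x \<Rightarrow> 'x \<Rightarrow> 'a) \<Rightarrow> bool" where
  "hilbert_module rmul hinner \<longleftrightarrow>
     (\<forall>x y a. rmul (x + y) a = rmul x a + rmul y a) \<and>
     (\<forall>x a b. rmul x (a + b) = rmul x a + rmul x b) \<and>
     (\<forall>x a b. rmul x (a * b) = rmul (rmul x a) b) \<and>
     (\<forall>c x a. rmul (c *\<^sub>C x) a = c *\<^sub>C rmul x a) \<and>
     (\<forall>c x a. rmul x (c *\<^sub>C a) = c *\<^sub>C rmul x a) \<and>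
     (\<forall>x y z. hinner x (y + z) = hinner x y + hinner x z) \<and>
     (\<forall>c x y. hinner x (c *\<^sub>C y) = c *\<^sub>C hinner x y) \<and>
     (\<forall>x y a. hinner x (rmul y a) = hinner x y * a) \<and>
     (\<forall>x y. hinner y x = cstar (hinner x y)) \<and>
     (\<forall>x. cpos (hinner x x)) \<and>
     (\<forall>x. hinner x x = 0 \<longrightarrow> x = 0) \<and>
     (\<forall>X::nat \<Rightarrow> 'x. (\<forall>e>0. \<exists>N. \<forall>m\<ge>N. \<forall>n\<ge>N. hnorm hinner (X m - X n) < e) \<longrightarrow>
        (\<exists>L. \<forall>e>0. \<exists>N. \<forall>n\<ge>N. hnorm hinner (X n - L) < e))"

definition full_module :: "('x \<Rightarrow> 'x \<Rightarrow> 'a::cstar_algebra) \<Rightarrow> bool" where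
  "full_module hinner \<longleftrightarrow> closed_ideal_hull {hinner x y | x y. True} = UNIV"

definition cp_module_map_with :: "('x \<Rightarrow> 'x \<Rightarrow> 'a::cstar_algebra) \<Rightarrow> ('x \<Rightarrow> 'h::chilbert \<Rightarrow> 'k::chilbert)
    \<Rightarrow> ('a \<Rightarrow> 'h \<Rightarrow> 'h) \<Rightarrow> bool" where
  "cp_module_map_with hinner \<Phi> \<phi> \<longleftrightarrow> (\<forall>x. bounded_clinear (\<Phi> x)) \<and> cp_map \<phi> \<and>
     (\<forall>x y. cadj (\<Phi> x) \<circ> \<Phi> y = \<phi> (hinner x y))"

definition cp_module_map :: "('x \<Rightarrow> 'x \<Rightarrow> 'a::cstar_algebra) \<Rightarrow> ('x \<Rightarrow> 'h::chilbert \<Rightarrow> 'k::chilbert) \<Rightarrow> bool" where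
  "cp_module_map hinner \<Phi> \<longleftrightarrow> (\<exists>\<phi>. cp_module_map_with hinner \<Phi> \<phi>)"

text \<open>Minimal Stinespring dilation (\<pi>\<phi>, H\<Phi>, V) of \<phi>; H\<Phi> is the type 'hp.\<close>
definition min_stinespring :: "('a::cstar_algebra \<Rightarrow> 'h::chilbert \<Rightarrow> 'h) \<Rightarrow> ('a \<Rightarrow> 'hp::chilbert \<Rightarrow> 'hp)
    \<Rightarrow> ('h \<Rightarrow> 'hp) \<Rightarrow> bool" where
  "min_stinespring \<phi> \<pi> V \<longleftrightarrow> star_rep \<pi> \<and> bounded_clinear V \<and>
     (\<forall>a. \<phi> a = cadj V \<circ> \<pi> a \<circ> V) \<and>
     ccspan {\<pi> a (V h) | a h. True} = UNIV"

text \<open>K\<Phi> is the closed subspace [\<Phi>(X)H] of K; \<pi>\<Phi>(x) : H\<Phi> \<rightarrow> K\<Phi> is represented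
  as a map into K with range in K\<Phi>; W\<Phi>^* W\<Phi> is the projection onto K\<Phi>.\<close>
definition stinespring_construction ::
  "('x \<Rightarrow> 'a::cstar_algebra \<Rightarrow> 'x) \<Rightarrow> ('x \<Rightarrow> 'x \<Rightarrow> 'a) \<Rightarrow> ('x \<Rightarrow> 'h::chilbert \<Rightarrow> 'k::chilbert)
   \<Rightarrow> ('a \<Rightarrow> 'h \<Rightarrow> 'h) \<Rightarrow> ('a \<Rightarrow> 'hp::chilbert \<Rightarrow> 'hp) \<Rightarrow> ('h \<Rightarrow> 'hp) \<Rightarrow> 'k set
   \<Rightarrow> ('x \<Rightarrow> 'hp \<Rightarrow> 'k) \<Rightarrow> bool" where
  "stinespring_construction rmul hinner \<Phi> \<phi> \<pi>\<phi> V K\<Phi> \<pi>\<Phi> \<longleftrightarrow>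
     min_stinespring \<phi> \<pi>\<phi> V \<and>
     K\<Phi> = ccspan {\<Phi> x h | x h. True} \<and>
     (\<forall>x. bounded_clinear (\<pi>\<Phi> x) \<and> range (\<pi>\<Phi> x) \<subseteq> K\<Phi>) \<and>
     (\<forall>x y. cadj (\<pi>\<Phi> x) \<circ> \<pi>\<Phi> y = \<pi>\<phi> (hinner x y)) \<and>
     (\<forall>x a h. \<pi>\<Phi> x (\<pi>\<phi> a (V h)) = \<Phi> (rmul x a) h)"

end

theory Submission
  imports Defs
begin

text \<open>
  The intertwining relation \<open>\<pi>\<^sub>\<Phi>(x) T = S \<pi>\<^sub>\<Phi>(x)\<close> passes to positive square roots, since the
  square root of a positive operator is a norm limit of polynomials in it (the binomial series of
  \<open>1 - \<surd>(1 - t)\<close>). Hence \<open>\<surd>S \<pi>\<^sub>\<Phi>(x) \<surd>T = \<pi>\<^sub>\<Phi>(x) T\<close>, whose range already lies in \<open>K\<^sub>\<Phi>\<close>, so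
  \<open>\<Phi>\<^sub>T\<^sub>\<oplus>\<^sub>S(x) = \<pi>\<^sub>\<Phi>(x) (T V\<^sub>\<Phi>)\<close>. A representation of \<open>X\<close> followed by a fixed operator \<open>W\<close> is completely
  positive with associated map the compression \<open>a \<mapsto> W\<^sup>* \<pi>\<^sub>\<phi>(a) W\<close>.
\<close>

lemma scaleC_zero_right[simp]: "a *\<^sub>C (0::'a::complex_vector) = 0"
  using scaleC_add_right[of a "0::'a" 0] by simp

lemma scaleC_zero_left[simp]: "0 *\<^sub>C (x::'a::complex_vector) = 0"
  using scaleC_add_left[of 0 0 x] by simp

lemma scaleC_minus_right: "a *\<^sub>C (- x::'a::complex_vector) = - (a *\<^sub>C x)"
  using scaleC_add_right[of a x "-x"] by (simp add: eq_neg_iff_add_eq_0 add.commute)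

lemma scaleC_minus_left: "(- a) *\<^sub>C (x::'a::complex_vector) = - (a *\<^sub>C x)"
  using scaleC_add_left[of a "-a" x] by (simp add: eq_neg_iff_add_eq_0 add.commute)

lemma scaleC_diff_right: "a *\<^sub>C (x - y::'a::complex_vector) = a *\<^sub>C x - a *\<^sub>C y"
  by (simp only: diff_conv_add_uminus scaleC_add_right scaleC_minus_right)

lemma scaleC_of_real: "complex_of_real r *\<^sub>C (x::'a::complex_vector) = r *\<^sub>R x"
  by (subst scaleR_scaleC) (rule refl)

lemma scaleR_scaleC_commute: "r *\<^sub>R (a *\<^sub>C (v::'a::complex_vector)) = a *\<^sub>C (r *\<^sub>R v)"
  by (simp only: scaleR_scaleC scaleC_scaleC mult.commute)

lemma bounded_linear_scaleC: "bounded_linear (\<lambda>v::'a::complex_normed_vector. a *\<^sub>C v)"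
  by (rule bounded_linear_intro[of _ "cmod a"])
     (auto simp: scaleC_add_right scaleR_scaleC_commute norm_scaleC mult.commute)

lemma cinner_zero_right[simp]: "cinner (x::'a::chilbert) 0 = 0"
  using cinner_add_right[of x 0 0] by simp

lemma cinner_add_left: "cinner (x + y::'a::chilbert) z = cinner x z + cinner y z"
  by (subst (1 2 3) cinner_commute) (simp add: cinner_add_right)

lemma cinner_zero_left[simp]: "cinner 0 (x::'a::chilbert) = 0"
  by (subst cinner_commute) simp

lemma cinner_scaleC_left: "cinner (c *\<^sub>C x::'a::chilbert) y = cnj c * cinner x y"
  by (subst (1 2) cinner_commute) (simp add: cinner_scaleC_right)

lemma cinner_minus_right: "cinner (x::'a::chilbert) (- y) = - cinner x y"
  using cinner_add_right[of x y "-y"] by (simp add: eq_neg_iff_add_eq_0 add.commute)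

lemma cinner_minus_left: "cinner (- x::'a::chilbert) y = - cinner x y"
  using cinner_add_left[of x "-x" y] by (simp add: eq_neg_iff_add_eq_0 add.commute)

lemma cinner_diff_right: "cinner (x::'a::chilbert) (y - z) = cinner x y - cinner x z"
  by (simp only: diff_conv_add_uminus cinner_add_right cinner_minus_right)

lemma cinner_diff_left: "cinner (x - y::'a::chilbert) z = cinner x z - cinner y z"
  by (simp only: diff_conv_add_uminus cinner_add_left cinner_minus_left)

lemma cinner_sum_right: "cinner (x::'a::chilbert) (\<Sum>i\<in>I. f i) = (\<Sum>i\<in>I. cinner x (f i))"
  by (induction I rule: infinite_finite_induct) (auto simp: cinner_add_right)

lemma cinner_sum_left: "cinner (\<Sum>i\<in>I. f i) (x::'a::chilbert) = (\<Sum>i\<in>I. cinner (f i) x)"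
  by (induction I rule: infinite_finite_induct) (auto simp: cinner_add_left)

lemma cinner_scaleR_right: "cinner (x::'a::chilbert) (r *\<^sub>R y) = complex_of_real r * cinner x y"
  by (subst scaleR_scaleC) (rule cinner_scaleC_right)

lemma Im_cinner_self: "Im (cinner (x::'a::chilbert) x) = 0"
proof -
  have "Im (cinner x x) = Im (cnj (cinner x x))" by (subst cinner_commute) (rule refl)
  then show ?thesis by simp
qed

lemma Re_cinner_self: "Re (cinner (x::'a::chilbert) x) = (norm x)\<^sup>2"
  by (simp add: norm_eq_sqrt_cinner cinner_self_nonneg)

lemma cinner_self_eq_norm_square: "cinner (x::'a::chilbert) x = complex_of_real ((norm x)\<^sup>2)"
  by (simp add: complex_eq_iff Re_cinner_self Im_cinner_self)

lemma cnonneg_cinner_self: "cnonneg (cinner (x::'a::chilbert) x)"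
  by (simp add: cnonneg_def Im_cinner_self cinner_self_nonneg)

lemma cnonneg_sum: "(\<And>i. i \<in> I \<Longrightarrow> cnonneg (f i)) \<Longrightarrow> cnonneg (sum f I)"
  unfolding cnonneg_def by (simp add: Re_sum Im_sum sum_nonneg)

lemma cinner_expand:
  "cinner (x + l *\<^sub>C y) (u + m *\<^sub>C (v::'a::chilbert)) =
     cinner x u + m * cinner x v + cnj l * cinner y u + cnj l * m * cinner y v"
  unfolding cinner_add_left cinner_add_right cinner_scaleC_left cinner_scaleC_right
  by (simp add: ring_distribs mult.assoc)

lemma cinner_extensionality: "(\<And>x. cinner x y = cinner x (z::'a::chilbert)) \<Longrightarrow> y = z"
proof -
  assume "\<And>x. cinner x y = cinner x z"
  then have "cinner (y - z) (y - z) = 0" by (simp add: cinner_diff_right)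
  then show "y = z" by (simp add: cinner_self_eq_0)
qed

lemma parallelogram_law:
  "(norm (a + b))\<^sup>2 + (norm (a - b))\<^sup>2 = 2 * (norm a)\<^sup>2 + 2 * (norm (b::'a::chilbert))\<^sup>2"
  unfolding Re_cinner_self[symmetric]
  by (simp add: cinner_add_left cinner_add_right cinner_diff_left cinner_diff_right)

context chilbert begin
subclass banach ..
end

lemma clinear_add: "clinear f \<Longrightarrow> f (x + y) = f x + f y" by (simp add: clinear_def)

lemma clinear_scaleC: "clinear f \<Longrightarrow> f (c *\<^sub>C x) = c *\<^sub>C f x" by (simp add: clinear_def)

lemma clinear_zero: "clinear f \<Longrightarrow> f 0 = 0"
proof -
  assume "clinear f" then have "f (0 + 0) = f 0 + f 0" by (rule clinear_add)
  then show ?thesis by simp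
qed

lemma clinear_minus: "clinear f \<Longrightarrow> f (- x) = - f x"
proof -
  assume f: "clinear f" then have "f (x + - x) = f x + f (- x)" by (rule clinear_add)
  then show ?thesis using clinear_zero[OF f] by (simp add: eq_neg_iff_add_eq_0 add.commute)
qed

lemma clinear_diff: "clinear f \<Longrightarrow> f (x - y) = f x - f y"
  by (simp only: diff_conv_add_uminus clinear_add clinear_minus)

lemma clinear_sum: "clinear f \<Longrightarrow> f (\<Sum>i\<in>I. g i) = (\<Sum>i\<in>I. f (g i))"
  by (induction I rule: infinite_finite_induct) (auto simp: clinear_add clinear_zero)

lemma clinear_scaleR: "clinear f \<Longrightarrow> f (r *\<^sub>R x) = r *\<^sub>R f x"
  by (simp add: scaleR_scaleC clinear_scaleC)

lemma clinear_id: "clinear id" by (simp add: clinear_def)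

lemma clinear_compose: "clinear f \<Longrightarrow> clinear g \<Longrightarrow> clinear (f \<circ> g)"
  by (simp add: clinear_def)

lemma clinear_funpow: "clinear (f::'a::complex_vector \<Rightarrow> 'a) \<Longrightarrow> clinear (f ^^ n)"
  by (induction n) (simp_all add: clinear_id flip: o_def, simp add: clinear_compose)

lemma bounded_clinear_imp_clinear: "bounded_clinear f \<Longrightarrow> clinear f"
  by (simp add: bounded_clinear_def)

lemma bounded_clinear_imp_bounded_linear: "bounded_clinear f \<Longrightarrow> bounded_linear f"
  unfolding bounded_clinear_def by (auto intro: bounded_linear_intro clinear_add clinear_scaleR)

lemma bounded_clinear_pos_bound: "bounded_clinear f \<Longrightarrow> \<exists>B>0. \<forall>x. norm (f x) \<le> B * norm x"
proof -
  assume "bounded_clinear f"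
  then obtain K where K: "\<forall>x. norm (f x) \<le> norm x * K" unfolding bounded_clinear_def by blast
  have "norm (f x) \<le> max K 1 * norm x" for x
  proof -
    have "norm (f x) \<le> norm x * K" using K by blast
    also have "\<dots> \<le> norm x * max K 1" by (intro mult_left_mono) auto
    finally show ?thesis by (simp add: mult.commute)
  qed
  then show ?thesis by (intro exI[of _ "max K 1"]) auto
qed

lemma bounded_clinear_compose:
  assumes "bounded_clinear f" and "bounded_clinear g"
  shows "bounded_clinear (f \<circ> g)"
proof -
  obtain A B where A: "A > 0" "\<And>x. norm (f x) \<le> A * norm x" and B: "\<And>x. norm (g x) \<le> B * norm x"
    using assms bounded_clinear_pos_bound by metis
  have "norm (f (g x)) \<le> norm x * (A * B)" for x
    using A(2)[of "g x"] B[of x] mult_left_mono[OF B[of x] less_imp_le[OF A(1)]]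
    by (simp add: mult_ac)
  then show ?thesis
    using assms unfolding bounded_clinear_def by (auto simp: clinear_compose)
qed

lemma bounded_clinear_id: "bounded_clinear (id::'a::complex_normed_vector \<Rightarrow> 'a)"
  unfolding bounded_clinear_def clinear_def by (auto intro: exI[of _ 1])

lemma bounded_clinear_funpow:
  "bounded_clinear (f::'a::complex_normed_vector \<Rightarrow> 'a) \<Longrightarrow> bounded_clinear (f ^^ n)"
  by (induction n) (simp_all add: bounded_clinear_id flip: o_def, simp add: bounded_clinear_compose)

lemma hermitian_if_real_form:
  assumes "clinear P" and "\<And>z. Im (cinner z (P z)) = 0"
  shows "cinner x (P y) = cnj (cinner y (P (x::'a::chilbert)))"
proof -
  let ?u = "cinner x (P y)" and ?v = "cinner y (P x)"
  have expand: "cinner (x + l *\<^sub>C y) (P (x + l *\<^sub>C y)) =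
      cinner x (P x) + l * ?u + cnj l * ?v + cnj l * l * cinner y (P y)" for l
    using assms(1) by (simp add: clinear_add clinear_scaleC cinner_expand)
  have "Im (?u + ?v) = 0"
    using expand[of 1] assms(2)[of "x + 1 *\<^sub>C y"] assms(2)[of x] assms(2)[of y] by simp
  moreover have "Re (?u - ?v) = 0"
    using expand[of "\<i>"] assms(2)[of "x + \<i> *\<^sub>C y"] assms(2)[of x] assms(2)[of y] by simp
  ultimately show ?thesis by (simp add: complex_eq_iff)
qed

lemma cauchy_schwarz_positive_form:
  assumes "clinear P" and "\<And>z. cnonneg (cinner z (P z))"
  shows "(cmod (cinner x (P y)))\<^sup>2 \<le> Re (cinner x (P x)) * Re (cinner y (P (y::'a::chilbert)))"
proof -
  have herm: "cinner a (P b) = cnj (cinner b (P a))" for a b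
    using hermitian_if_real_form[OF assms(1)] assms(2) unfolding cnonneg_def by blast
  define w where "w = cinner x (P y)"
  define a where "a = Re (cinner x (P x))"
  define b where "b = Re (cinner y (P y))"
  define c where "c = (cmod w)\<^sup>2"
  have a0: "a \<ge> 0" and b0: "b \<ge> 0" using assms(2) unfolding cnonneg_def a_def b_def by auto
  have Im_a: "Im (cinner x (P x)) = 0" and Im_b: "Im (cinner y (P y)) = 0"
    using assms(2) unfolding cnonneg_def by auto
  have quadratic: "0 \<le> a - 2 * t * c + t\<^sup>2 * c * b" for t :: real
  proof -
    define l where "l = - (complex_of_real t * cnj w)"
    have wc: "w * cnj w = complex_of_real c" unfolding c_def by (rule complex_norm_square[symmetric])
    have "l * w = - complex_of_real (t * c)" "cnj l * cnj w = - complex_of_real (t * c)"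
      "cnj l * l = complex_of_real (t\<^sup>2 * c)"
      unfolding l_def using wc by (simp_all add: mult_ac power2_eq_square)
    moreover have "cinner (x + l *\<^sub>C y) (P (x + l *\<^sub>C y)) =
      cinner x (P x) + l * w + cnj l * cnj w + cnj l * l * cinner y (P y)"
      using assms(1) herm[of y x] by (simp add: clinear_add clinear_scaleC cinner_expand w_def)
    ultimately have "Re (cinner (x + l *\<^sub>C y) (P (x + l *\<^sub>C y))) = a - 2 * t * c + t\<^sup>2 * c * b"
      using Im_a Im_b unfolding a_def b_def by simp
    moreover have "0 \<le> Re (cinner (x + l *\<^sub>C y) (P (x + l *\<^sub>C y)))"
      using assms(2) unfolding cnonneg_def by auto
    ultimately show ?thesis by simp
  qed
  have "c \<le> a * b"
  proof (cases "b = 0")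
    case True
    have "0 \<le> a - 2 * ((a + 1) / c) * c" using quadratic[of "(a + 1) / c"] True by simp
    then show ?thesis using a0 True by (cases "c = 0") auto
  next
    case False
    then have "b > 0" using b0 by simp
    moreover have "0 \<le> a - 2 * (1 / b) * c + (1 / b)\<^sup>2 * c * b" by (rule quadratic)
    ultimately show ?thesis by (simp add: power2_eq_square field_simps)
  qed
  then show ?thesis unfolding c_def w_def a_def b_def .
qed

lemma positive_form_zero_imp_zero:
  assumes "clinear P" "\<And>z. cnonneg (cinner z (P z))" "\<And>z. Re (cinner z (P z)) = 0"
  shows "P y = (0::'a::chilbert)"
proof -
  have "(cmod (cinner (P y) (P y)))\<^sup>2 \<le> Re (cinner (P y) (P (P y))) * Re (cinner y (P y))"
    by (rule cauchy_schwarz_positive_form[OF assms(1,2)])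
  then have "cinner (P y) (P y) = 0" using assms(3)[of y] by simp
  then show ?thesis by (simp add: cinner_self_eq_0)
qed

lemma op_pos_hermitian: "op_pos P \<Longrightarrow> cinner x (P y) = cinner (P x) (y::'a::chilbert)"
proof -
  assume P: "op_pos P"
  then have "cinner x (P y) = cnj (cinner y (P x))"
    by (intro hermitian_if_real_form) (auto simp: op_pos_def bounded_clinear_def cnonneg_def)
  then show ?thesis using cinner_commute[of "P x" y] by simp
qed

lemma positive_form_le_imp_norm_le:
  assumes "clinear A" "\<And>z. cnonneg (cinner z (A z))" "\<And>z. Re (cinner z (A z)) \<le> (norm z)\<^sup>2"
  shows "norm (A y) \<le> norm (y::'a::chilbert)"
proof -
  have "(cmod (cinner (A y) (A y)))\<^sup>2 \<le> Re (cinner (A y) (A (A y))) * Re (cinner y (A y))"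
    by (rule cauchy_schwarz_positive_form[OF assms(1,2)])
  also have "\<dots> \<le> (norm (A y))\<^sup>2 * (norm y)\<^sup>2"
    using assms(2,3) unfolding cnonneg_def by (intro mult_mono) auto
  moreover have "cmod (cinner (A y) (A y)) = (norm (A y))\<^sup>2"
    by (simp only: cinner_self_eq_norm_square norm_of_real) simp
  ultimately have "(norm (A y))\<^sup>2 * (norm (A y))\<^sup>2 \<le> (norm (A y))\<^sup>2 * (norm y)\<^sup>2"
    by (simp add: power2_eq_square)
  then have "(norm (A y))\<^sup>2 \<le> (norm y)\<^sup>2" if "A y \<noteq> 0"
    using that mult_le_cancel_left_pos[of "(norm (A y))\<^sup>2" "(norm (A y))\<^sup>2" "(norm y)\<^sup>2"] by simp
  then show ?thesis by (cases "A y = 0") (auto intro: power2_le_imp_le)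
qed

lemma positive_forms_sum_zero:
  assumes "clinear M" "clinear N" "\<And>z. cnonneg (cinner z (M z))" "\<And>z. cnonneg (cinner z (N z))"
    and sum_zero: "\<And>z. M z + N z = 0"
  shows "M y = (0::'a::chilbert)"
proof (rule positive_form_zero_imp_zero[OF assms(1,3)])
  fix z
  have "Re (cinner z (M z)) + Re (cinner z (N z)) = 0"
    using arg_cong[OF sum_zero[of z], of "\<lambda>v. Re (cinner z v)"] by (simp add: cinner_add_right)
  then show "Re (cinner z (M z)) = 0" using assms(3,4)[of z] by (simp add: cnonneg_def)
qed

lemma hermitian_cube_zero:
  assumes herm: "\<And>u v. cinner u (D v) = cinner (D u) v" and cube: "\<And>v. D (D (D v)) = 0"
  shows "D y = (0::'a::chilbert)"
proof -
  have "cinner (D (D v)) (D (D v)) = 0" for v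
    using herm[of "D v" "D (D v)"] by (simp add: cube)
  then have "D (D v) = 0" for v by (simp add: cinner_self_eq_0)
  then have "cinner (D y) (D y) = 0" using herm[of y "D y"] by simp
  then show ?thesis by (simp add: cinner_self_eq_0)
qed

lemma norm_cinner_le: "cmod (cinner x (y::'a::chilbert)) \<le> norm x * norm y"
proof -
  have "(cmod (cinner x (id y)))\<^sup>2 \<le> Re (cinner x (id x)) * Re (cinner y (id y))"
    by (rule cauchy_schwarz_positive_form[OF clinear_id]) (simp add: cnonneg_cinner_self)
  then have "(cmod (cinner x y))\<^sup>2 \<le> (norm x * norm y)\<^sup>2"
    by (simp add: Re_cinner_self power_mult_distrib)
  then show ?thesis by (rule power2_le_imp_le) simp
qed

lemma bounded_linear_cinner_right: "bounded_linear (\<lambda>y. cinner (x::'a::chilbert) y)"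
  by (rule bounded_linear_intro[of _ "norm x"])
     (auto simp: cinner_add_right cinner_scaleR_right scaleR_conv_of_real,
      metis norm_cinner_le mult.commute)

section \<open>Orthogonal projection, Riesz representation and adjoints\<close>

lemma midpoint_distance_estimate:
  fixes x u v :: "'a::chilbert"
  assumes "d \<le> norm (x - (1/2) *\<^sub>R (u + v))" "0 \<le> d"
    and "norm (x - u) \<le> d + e1" "norm (x - v) \<le> d + e2" "0 \<le> e1" "0 \<le> e2"
  shows "(norm (u - v))\<^sup>2 \<le> 2 * (d + e1)\<^sup>2 + 2 * (d + e2)\<^sup>2 - 4 * d\<^sup>2"
proof -
  have "(x - u) + (x - v) = 2 *\<^sub>R (x - (1/2) *\<^sub>R (u + v))"
    by (simp add: algebra_simps scaleR_2)
  then have "4 * d\<^sup>2 \<le> (norm ((x - u) + (x - v)))\<^sup>2"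
    using assms(1,2) by (simp add: power2_eq_square mult_mono)
  moreover have "(norm (u - v))\<^sup>2 = 2 * (norm (x - u))\<^sup>2 + 2 * (norm (x - v))\<^sup>2
      - (norm ((x - u) + (x - v)))\<^sup>2"
    using parallelogram_law[of "x - u" "x - v"] by (simp add: norm_minus_commute)
  moreover have "(norm (x - u))\<^sup>2 \<le> (d + e1)\<^sup>2" "(norm (x - v))\<^sup>2 \<le> (d + e2)\<^sup>2"
    using assms(3-6) by (auto intro: power_mono)
  ultimately show ?thesis by linarith
qed

lemma Cauchy_if_norm_diff_square_le:
  fixes s :: "nat \<Rightarrow> 'a::real_normed_vector"
  assumes le: "\<And>k m. (norm (s k - s m))\<^sup>2 \<le> C * (inverse (real (Suc k)) + inverse (real (Suc m)))"
  shows "Cauchy s"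
proof (rule metric_CauchyI)
  fix eps :: real assume eps: "eps > 0"
  have C: "C \<ge> 0" using le[of 0 0] by (simp add: zero_le_mult_iff)
  obtain K :: nat where K: "2 * C / eps\<^sup>2 < real K" using reals_Archimedean2 by blast
  have "dist (s k) (s m) < eps" if "k \<ge> K" "m \<ge> K" for k m
  proof -
    have "inverse (real (Suc k)) \<le> inverse (real (Suc K))" "inverse (real (Suc m)) \<le> inverse (real (Suc K))"
      using that by (auto intro!: le_imp_inverse_le)
    then have "(norm (s k - s m))\<^sup>2 \<le> C * (2 * inverse (real (Suc K)))"
      using le[of k m] C by (smt (verit) mult_left_mono)
    also have "\<dots> < eps\<^sup>2"
    proof -
      have "2 * C < eps\<^sup>2 * real K" using K eps by (simp add: field_simps)
      also have "\<dots> \<le> eps\<^sup>2 * real (Suc K)" by (intro mult_left_mono) auto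
      finally show ?thesis by (simp add: field_simps)
    qed
    finally show ?thesis using eps by (simp add: dist_norm power_less_imp_less_base)
  qed
  then show "\<exists>M. \<forall>m\<ge>M. \<forall>n\<ge>M. dist (s m) (s n) < eps" by blast
qed

lemma nearest_point_exists:
  fixes N :: "'a::chilbert set"
  assumes "closed N" "N \<noteq> {}" and midpoint: "\<And>u v. u \<in> N \<Longrightarrow> v \<in> N \<Longrightarrow> (1/2) *\<^sub>R (u + v) \<in> N"
  shows "\<exists>p\<in>N. \<forall>n\<in>N. norm (x - p) \<le> norm (x - n)"
proof -
  define d where "d = Inf ((\<lambda>n. norm (x - n)) ` N)"
  have bdd: "bdd_below ((\<lambda>n. norm (x - n)) ` N)" by (rule bdd_belowI[of _ 0]) auto
  have d_le: "d \<le> norm (x - n)" if "n \<in> N" for n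
    unfolding d_def using that bdd by (intro cInf_lower) auto
  have d0: "d \<ge> 0" unfolding d_def using assms(2) by (intro cInf_greatest) auto
  define e where "e k = inverse (real (Suc k))" for k
  have e0: "0 < e k" and e1: "e k \<le> 1" for k unfolding e_def by (auto simp: inverse_le_1_iff)
  have "\<exists>n\<in>N. norm (x - n) < d + e k" for k
    using cInf_lessD[of "(\<lambda>n. norm (x - n)) ` N" "d + e k"] assms(2) e0[of k] unfolding d_def
    by auto
  then obtain s where sN: "\<And>k. s k \<in> N" and sd: "\<And>k. norm (x - s k) < d + e k" by metis
  have dist_s: "(norm (s k - s m))\<^sup>2 \<le> (4 * d + 2) * (e k + e m)" for k m
  proof -
    have "(norm (s k - s m))\<^sup>2 \<le> 2 * (d + e k)\<^sup>2 + 2 * (d + e m)\<^sup>2 - 4 * d\<^sup>2"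
      using sd[of k] sd[of m] e0[of k] e0[of m]
      by (intro midpoint_distance_estimate[where x = x] d0 d_le midpoint sN) auto
    moreover have "(e k)\<^sup>2 \<le> e k" "(e m)\<^sup>2 \<le> e m"
      using e0 e1 by (auto simp: power2_eq_square intro: mult_left_le)
    ultimately show ?thesis by (simp add: power2_eq_square algebra_simps)
  qed
  have "Cauchy s"
    using dist_s by (intro Cauchy_if_norm_diff_square_le[of s "4 * d + 2"]) (simp add: e_def)
  then obtain p where sp: "s \<longlonglongrightarrow> p" using Cauchy_convergent_iff convergent_def by blast
  have "norm (x - p) \<le> d"
  proof (rule LIMSEQ_le)
    show "(\<lambda>k. norm (x - s k)) \<longlonglongrightarrow> norm (x - p)" by (intro tendsto_intros sp)
    show "(\<lambda>k. d + e k) \<longlonglongrightarrow> d" unfolding e_def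
      using tendsto_add[OF tendsto_const LIMSEQ_inverse_real_of_nat, of d] by simp
    show "\<exists>N. \<forall>n\<ge>N. norm (x - s n) \<le> d + e n" using sd less_imp_le by blast
  qed
  then show ?thesis using closed_sequentially[OF assms(1) sN sp] d_le by force
qed

lemma nearest_point_orthogonal:
  fixes N :: "'a::chilbert set"
  assumes "p \<in> N" and nearest: "\<And>n. n \<in> N \<Longrightarrow> norm (x - p) \<le> norm (x - n)"
    and add: "\<And>u v. u \<in> N \<Longrightarrow> v \<in> N \<Longrightarrow> u + v \<in> N"
    and scale: "\<And>c u. u \<in> N \<Longrightarrow> c *\<^sub>C u \<in> N"
    and "n \<in> N"
  shows "cinner n (x - p) = 0"
proof -
  define y where "y = x - p"
  define w where "w = cinner n y"
  define c where "c = (cmod w)\<^sup>2"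
  define b where "b = (norm n)\<^sup>2"
  have wc: "w * cnj w = complex_of_real c" unfolding c_def by (rule complex_norm_square[symmetric])
  have quadratic: "0 \<le> - 2 * t * c + t\<^sup>2 * c * b" for t :: real
  proof -
    define l where "l = complex_of_real t * w"
    have "p + l *\<^sub>C n \<in> N" by (intro add scale assms)
    moreover have "x - (p + l *\<^sub>C n) = y + (- l) *\<^sub>C n"
      unfolding y_def by (simp add: scaleC_minus_left)
    ultimately have le: "(norm y)\<^sup>2 \<le> (norm (y + (- l) *\<^sub>C n))\<^sup>2"
      using nearest unfolding y_def by (metis norm_ge_zero power_mono)
    have "(- l) * cinner y n = - complex_of_real (t * c)"
      "cnj (- l) * cinner n y = - complex_of_real (t * c)"
      "cnj (- l) * (- l) = complex_of_real (t\<^sup>2 * c)"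
      unfolding l_def using wc cinner_commute[of y n] by (simp_all add: w_def mult_ac power2_eq_square)
    then have "cinner (y + (- l) *\<^sub>C n) (y + (- l) *\<^sub>C n) =
        cinner y y - 2 * complex_of_real (t * c) + complex_of_real (t\<^sup>2 * c) * cinner n n"
      unfolding cinner_expand by simp
    then have "(norm (y + (- l) *\<^sub>C n))\<^sup>2 = (norm y)\<^sup>2 - 2 * t * c + t\<^sup>2 * c * b"
      unfolding b_def Re_cinner_self[symmetric] by (simp add: Im_cinner_self)
    then show ?thesis using le by simp
  qed
  define t where "t = inverse (b + 1)"
  have "b \<ge> 0" unfolding b_def by simp
  then have "t > 0" "t * b < 1" unfolding t_def by (auto simp: field_simps)
  moreover have "0 \<le> t * c * (t * b - 2)"
    using quadratic[of t] by (simp add: power2_eq_square algebra_simps)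
  moreover have "c \<ge> 0" unfolding c_def by simp
  ultimately have "c = 0" by (smt (verit) mult_pos_neg mult_pos_pos)
  then show ?thesis unfolding c_def w_def y_def by simp
qed

lemma orthogonal_projection_exists:
  fixes N :: "'a::chilbert set"
  assumes "closed N" "0 \<in> N"
    and add: "\<And>u v. u \<in> N \<Longrightarrow> v \<in> N \<Longrightarrow> u + v \<in> N"
    and scale: "\<And>c u. u \<in> N \<Longrightarrow> c *\<^sub>C u \<in> N"
  shows "\<exists>p\<in>N. \<forall>n\<in>N. cinner n (x - p) = 0"
proof -
  have "(1/2) *\<^sub>R (u + v) \<in> N" if "u \<in> N" "v \<in> N" for u v
    using scale[OF add[OF that], of "complex_of_real (1/2)"] unfolding scaleC_of_real .
  then obtain p where "p \<in> N" "\<forall>n\<in>N. norm (x - p) \<le> norm (x - n)"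
    using nearest_point_exists[OF assms(1)] assms(2) by blast
  then show ?thesis using nearest_point_orthogonal[OF _ _ add scale] by blast
qed

lemma riesz_representation:
  fixes g :: "'a::chilbert \<Rightarrow> complex"
  assumes add: "\<And>x y. g (x + y) = g x + g y" and scale: "\<And>c x. g (c *\<^sub>C x) = c * g x"
    and bound: "\<And>x. cmod (g x) \<le> B * norm x"
  shows "\<exists>z. \<forall>x. g x = cinner z x"
proof -
  have "bounded_linear g"
    by (rule bounded_linear_intro[of _ B])
       (auto simp: add scale scaleR_scaleC[symmetric] scaleR_conv_of_real
        scale[of "complex_of_real _", unfolded scaleC_of_real] bound mult.commute)
  then interpret g: bounded_linear g .
  show ?thesis
  proof (cases "\<forall>x. g x = 0")
    case True then show ?thesis by (intro exI[of _ 0]) simp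
  next
    case False
    then obtain x0 where gx0: "g x0 \<noteq> 0" by blast
    define N where "N = {x. g x = 0}"
    have "closed N" unfolding N_def
      by (intro closed_Collect_eq g.continuous_on continuous_on_id continuous_on_const)
    then obtain p where pN: "p \<in> N" and perp: "\<And>n. n \<in> N \<Longrightarrow> cinner n (x0 - p) = 0"
      using orthogonal_projection_exists[of N x0] unfolding N_def by (auto simp: add scale g.zero)
    define y where "y = x0 - p"
    have gy: "g y = g x0" using pN unfolding y_def N_def by (simp add: g.diff)
    have yy: "cinner y y \<noteq> 0" using gy gx0 by (auto simp: cinner_self_eq_0 g.zero)
    have "g x = cinner (cnj (g y / cinner y y) *\<^sub>C y) x" for x
    proof -
      have "g (x - (g x / g y) *\<^sub>C y) = 0" using gy gx0 by (simp add: g.diff scale)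
      then have "cinner (x - (g x / g y) *\<^sub>C y) y = 0" using perp unfolding N_def y_def by auto
      then have "cinner y (x - (g x / g y) *\<^sub>C y) = 0" by (subst cinner_commute) simp
      then have "cinner y x = (g x / g y) * cinner y y" by (simp add: cinner_diff_right cinner_scaleC_right)
      then show ?thesis using gy gx0 yy by (simp add: cinner_scaleC_left field_simps)
    qed
    then show ?thesis by blast
  qed
qed

lemma cinner_cadj:
  assumes "bounded_clinear F"
  shows "cinner (F x) y = cinner x (cadj F y)"
proof -
  obtain B where B: "\<And>x. norm (F x) \<le> B * norm x" using bounded_clinear_pos_bound[OF assms] by blast
  have F: "clinear F" using assms by (rule bounded_clinear_imp_clinear)
  have "\<exists>z. \<forall>x. cinner y (F x) = cinner z x" for y
  proof (rule riesz_representation[of _ "norm y * B"])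
    show "cmod (cinner y (F x)) \<le> norm y * B * norm x" for x
      using norm_cinner_le[of y "F x"] mult_left_mono[OF B[of x], of "norm y"] by (simp add: mult.assoc)
  qed (simp_all add: clinear_add[OF F] clinear_scaleC[OF F] cinner_add_right cinner_scaleC_right)
  then obtain G where "\<And>y x. cinner y (F x) = cinner (G y) x" by metis
  then have "\<forall>x y. cinner (F x) y = cinner x (G y)" by (metis cinner_commute)
  then have "\<forall>x y. cinner (F x) y = cinner x (cadj F y)"
    unfolding cadj_def by (rule someI[where P = "\<lambda>S. \<forall>x y. cinner (F x) y = cinner x (S y)"])
  then show ?thesis by blast
qed

lemma cadj_eqI:
  assumes "\<And>x y. cinner (F x) y = cinner x (G y)"
  shows "cadj F = G"
proof
  have "\<forall>x y. cinner (F x) y = cinner x (cadj F y)"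
    unfolding cadj_def
    by (rule someI[where P = "\<lambda>S. \<forall>x y. cinner (F x) y = cinner x (S y)" and x = G])
       (simp add: assms)
  then show "cadj F y = G y" for y by (metis assms cinner_extensionality)
qed

lemma cadj_comp:
  assumes "bounded_clinear F" "bounded_clinear G"
  shows "cadj (F \<circ> G) = cadj G \<circ> cadj F"
  by (rule cadj_eqI) (simp add: cinner_cadj assms)

lemma bounded_clinear_cadj:
  assumes F: "bounded_clinear F"
  shows "bounded_clinear (cadj F)"
proof -
  obtain B where B: "\<And>x. norm (F x) \<le> B * norm x" and B0: "B > 0"
    using bounded_clinear_pos_bound[OF F] by blast
  have "cadj F (a + b) = cadj F a + cadj F b" for a b
    by (rule cinner_extensionality) (simp add: cinner_cadj[OF F, symmetric] cinner_add_right)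
  moreover have "cadj F (c *\<^sub>C a) = c *\<^sub>C cadj F a" for a c
    by (rule cinner_extensionality) (simp add: cinner_cadj[OF F, symmetric] cinner_scaleC_right)
  ultimately have "clinear (cadj F)" unfolding clinear_def by blast
  moreover have "norm (cadj F y) \<le> norm y * B" for y
  proof -
    have "(norm (cadj F y))\<^sup>2 = Re (cinner (F (cadj F y)) y)"
      by (simp add: Re_cinner_self[symmetric] cinner_cadj[OF F])
    also have "\<dots> \<le> norm (F (cadj F y)) * norm y"
      using complex_Re_le_cmod norm_cinner_le order_trans by blast
    also have "\<dots> \<le> (B * norm (cadj F y)) * norm y" by (intro mult_right_mono B) simp
    finally have "norm (cadj F y) * norm (cadj F y) \<le> norm (cadj F y) * (norm y * B)"
      by (simp add: power2_eq_square mult_ac)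
    then show ?thesis
      using B0 by (cases "cadj F y = 0") (simp_all add: mult_le_cancel_left_pos)
  qed
  ultimately show ?thesis unfolding bounded_clinear_def by blast
qed

section \<open>The power series of \<open>1 - \<surd>(1 - t)\<close>\<close>

text \<open>The recursion is the coefficientwise form of \<open>f\<^sup>2 = 2 f - t\<close> for \<open>f(t) = 1 - \<surd>(1 - t)\<close>.\<close>

function sqrt_coeff :: "nat \<Rightarrow> real" where
  "sqrt_coeff n =
     (if n = 1 then 1/2 else (\<Sum>i\<in>{1..<n}. sqrt_coeff i * sqrt_coeff (n - i)) / 2)"
  by pat_completeness auto
termination by (relation "Wellfounded.measure id") auto

declare sqrt_coeff.simps[simp del]

lemma sqrt_coeff_0[simp]: "sqrt_coeff 0 = 0"
  by (subst sqrt_coeff.simps) simp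

lemma sqrt_coeff_1[simp]: "sqrt_coeff (Suc 0) = 1/2"
  by (subst sqrt_coeff.simps) simp

lemma sqrt_coeff_nonneg: "sqrt_coeff n \<ge> 0"
proof (induction n rule: less_induct)
  case (less n)
  show ?case by (subst sqrt_coeff.simps) (auto intro!: sum_nonneg mult_nonneg_nonneg less)
qed

lemma sqrt_coeff_convolution:
  "(\<Sum>i\<le>n. sqrt_coeff i * sqrt_coeff (n - i)) = 2 * sqrt_coeff n - (if n = 1 then 1 else 0)"
proof -
  consider "n = 0" | "n = 1" | "n \<ge> 2" by linarith
  then show ?thesis
  proof cases
    case 3
    have "{..n} = insert 0 (insert n {1..<n})" using 3 by auto
    then have "(\<Sum>i\<le>n. sqrt_coeff i * sqrt_coeff (n - i)) =
        (\<Sum>i\<in>{1..<n}. sqrt_coeff i * sqrt_coeff (n - i))"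
      using 3 by simp
    also have "\<dots> = 2 * sqrt_coeff n" using 3 by (subst (2) sqrt_coeff.simps) simp
    finally show ?thesis using 3 by simp
  qed (simp_all add: atMost_Suc)
qed

lemma sqrt_coeff_partial_sum_le: "(\<Sum>n<N. sqrt_coeff n) \<le> 1"
proof (induction N rule: less_induct)
  case (less N)
  have "(\<Sum>k<N. \<Sum>i\<le>k. sqrt_coeff i * sqrt_coeff (k - i)) =
      (\<Sum>(i,j)\<in>{(i,j). i + j < N}. sqrt_coeff i * sqrt_coeff j)"
    by (rule sum.triangle_reindex[symmetric])
  also have "{(i,j). i + j < N} = Sigma {..<N} (\<lambda>i. {..<N - i})" by auto
  also have "(\<Sum>(i,j)\<in>Sigma {..<N} (\<lambda>i. {..<N - i}). sqrt_coeff i * sqrt_coeff j) =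
      (\<Sum>i<N. sqrt_coeff i * (\<Sum>j<N - i. sqrt_coeff j))"
    by (simp add: sum.Sigma[symmetric] sum_distrib_left)
  also have "\<dots> \<le> (\<Sum>i<N. sqrt_coeff i)"
  proof (rule sum_mono)
    fix i assume "i \<in> {..<N}"
    then show "sqrt_coeff i * (\<Sum>j<N - i. sqrt_coeff j) \<le> sqrt_coeff i"
      using less[of "N - i"] sqrt_coeff_nonneg[of i]
      by (cases "i = 0") (auto intro: mult_left_le)
  qed
  finally have "(\<Sum>k<N. 2 * sqrt_coeff k - (if k = 1 then 1 else 0)) \<le> (\<Sum>n<N. sqrt_coeff n)"
    by (simp add: sqrt_coeff_convolution)
  moreover have "(\<Sum>k<N. (if k = (1::nat) then 1 else 0::real)) = (if 1 < N then 1 else 0)"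
    by (simp add: sum.delta)
  ultimately show ?case
    by (simp add: sum_subtractf sum_distrib_left[symmetric]) (smt (verit))
qed

lemma sqrt_coeff_finite_sum_le: "finite F \<Longrightarrow> sum sqrt_coeff F \<le> 1"
proof -
  assume "finite F"
  then have "sum sqrt_coeff F \<le> sum sqrt_coeff {..<Suc (Max (insert 0 F))}"
    by (intro sum_mono2) (auto simp: sqrt_coeff_nonneg less_Suc_eq_le)
  then show ?thesis using sqrt_coeff_partial_sum_le by (rule order_trans)
qed

lemma sqrt_coeff_summable: "sqrt_coeff summable_on UNIV"
  by (rule nonneg_bdd_above_summable_on)
     (auto simp: sqrt_coeff_nonneg sqrt_coeff_finite_sum_le intro!: bdd_aboveI[of _ 1])

lemma sqrt_coeff_infsum_le: "infsum sqrt_coeff UNIV \<le> 1"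
  by (rule infsum_le_finite_sums[OF sqrt_coeff_summable]) (simp add: sqrt_coeff_finite_sum_le)

section \<open>The square root of a positive operator\<close>

lemma has_sum_diff:
  fixes f g :: "'a \<Rightarrow> 'b::topological_ab_group_add"
  assumes "(f has_sum a) A" "(g has_sum b) A"
  shows "((\<lambda>x. f x - g x) has_sum (a - b)) A"
  using has_sum_add[OF assms(1) has_sum_uminus[where f = g and a = "- b", THEN iffD2]] assms(2) by simp

text \<open>For \<open>0 \<le> P \<le> c\<close> the operator \<open>A = 1 - P/c\<close> satisfies \<open>0 \<le> A \<le> 1\<close>, and
  \<open>\<surd>P = \<surd>c (1 - B)\<close> with \<open>B = \<Sum>\<^sub>n sqrt_coeff n A\<^sup>n\<close>, since \<open>\<surd>(P/c) = \<surd>(1 - A)\<close>.\<close>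

definition sqrt_shift :: "real \<Rightarrow> ('a::chilbert \<Rightarrow> 'a) \<Rightarrow> 'a \<Rightarrow> 'a" where
  "sqrt_shift c P x = x - (1/c) *\<^sub>R P x"

definition sqrt_series :: "real \<Rightarrow> ('a::chilbert \<Rightarrow> 'a) \<Rightarrow> 'a \<Rightarrow> 'a" where
  "sqrt_series c P x = infsum (\<lambda>n. sqrt_coeff n *\<^sub>R (sqrt_shift c P ^^ n) x) UNIV"

definition sqrt_op :: "real \<Rightarrow> ('a::chilbert \<Rightarrow> 'a) \<Rightarrow> 'a \<Rightarrow> 'a" where
  "sqrt_op c P x = sqrt c *\<^sub>R (x - sqrt_series c P x)"

locale bounded_pos_op =
  fixes P :: "'a::chilbert \<Rightarrow> 'a" and c :: real
  assumes op_pos: "op_pos P" and c_pos: "c > 0" and norm_le: "\<And>x. norm (P x) \<le> c * norm x"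
begin

abbreviation "A \<equiv> sqrt_shift c P"
abbreviation "B \<equiv> sqrt_series c P"
abbreviation "Q \<equiv> sqrt_op c P"

lemma clinear_P: "clinear P"
  using op_pos by (simp add: op_pos_def bounded_clinear_def)

lemma clinear_A: "clinear A"
  unfolding clinear_def sqrt_shift_def
  by (auto simp: clinear_add[OF clinear_P] clinear_scaleC[OF clinear_P] scaleC_diff_right
      scaleR_scaleC_commute scaleR_add_right)

lemma cinner_A_self_Im: "Im (cinner x (A x)) = 0"
  and cinner_A_self_Re: "Re (cinner x (A x)) = (norm x)\<^sup>2 - (1/c) * Re (cinner x (P x))"
  using op_pos
  by (auto simp: sqrt_shift_def cinner_diff_right cinner_scaleR_right Re_cinner_self Im_cinner_self
      op_pos_def cnonneg_def)

lemma cnonneg_cinner_A: "cnonneg (cinner x (A x))"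
proof -
  have "Re (cinner x (P x)) \<le> norm x * norm (P x)"
    using complex_Re_le_cmod norm_cinner_le order_trans by blast
  also have "\<dots> \<le> c * (norm x)\<^sup>2"
    using mult_left_mono[OF norm_le[of x], of "norm x"] by (simp add: power2_eq_square mult_ac)
  finally have "(1/c) * Re (cinner x (P x)) \<le> (norm x)\<^sup>2"
    using c_pos by (simp add: field_simps)
  then show ?thesis unfolding cnonneg_def by (simp add: cinner_A_self_Re cinner_A_self_Im)
qed

lemma cinner_A_self_le: "Re (cinner x (A x)) \<le> (norm x)\<^sup>2"
  using op_pos c_pos by (simp add: cinner_A_self_Re op_pos_def cnonneg_def)

lemma norm_A_le: "norm (A x) \<le> norm x"
  by (rule positive_form_le_imp_norm_le[OF clinear_A cnonneg_cinner_A cinner_A_self_le])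

lemma norm_A_power_le: "norm ((A ^^ n) x) \<le> norm x"
  by (induction n) (auto intro: order.trans[OF norm_A_le])

lemma A_hermitian: "cinner x (A y) = cinner (A x) y"
  using hermitian_if_real_form[OF clinear_A cinner_A_self_Im] cinner_commute by metis

lemma A_power_hermitian: "cinner x ((A ^^ n) y) = cinner ((A ^^ n) x) y"
  by (induction n arbitrary: x y) (simp_all add: A_hermitian funpow_swap1)

lemma cinner_A_power_self_Im: "Im (cinner x ((A ^^ n) x)) = 0"
proof -
  have "cinner x ((A ^^ n) x) = cnj (cinner x ((A ^^ n) x))"
    using A_power_hermitian[of x n x] cinner_commute[of "(A ^^ n) x" x] by simp
  then show ?thesis by (metis complex_cnj_cancel_iff Reals_cnj_iff complex_is_Real_iff)
qed

lemma bounded_linear_A_power: "bounded_linear (A ^^ n)"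
proof -
  have "bounded_clinear A"
    unfolding bounded_clinear_def using clinear_A norm_A_le by (auto intro: exI[of _ 1])
  then show ?thesis by (intro bounded_clinear_imp_bounded_linear bounded_clinear_funpow)
qed

lemma sqrt_series_terms_abs_summable:
  "(\<lambda>n. norm (sqrt_coeff n *\<^sub>R (A ^^ n) x)) summable_on UNIV"
proof (rule Infinite_Sum.abs_summable_on_comparison_test')
  show "(\<lambda>n. sqrt_coeff n * norm x) summable_on UNIV"
    by (rule summable_on_cmult_left[OF sqrt_coeff_summable])
  show "norm (sqrt_coeff n *\<^sub>R (A ^^ n) x) \<le> sqrt_coeff n * norm x" for n
    using sqrt_coeff_nonneg[of n] norm_A_power_le[of n x] by (simp add: mult_left_mono)
qed

lemma sqrt_series_has_sum: "((\<lambda>n. sqrt_coeff n *\<^sub>R (A ^^ n) x) has_sum B x) UNIV"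
  unfolding sqrt_series_def
  by (rule has_sum_infsum[OF Infinite_Sum.abs_summable_summable[OF sqrt_series_terms_abs_summable]])

lemma clinear_B: "clinear B"
proof -
  have "((\<lambda>n. sqrt_coeff n *\<^sub>R (A ^^ n) x + sqrt_coeff n *\<^sub>R (A ^^ n) y) has_sum (B x + B y)) UNIV"
    for x y by (intro has_sum_add sqrt_series_has_sum)
  then have "((\<lambda>n. sqrt_coeff n *\<^sub>R (A ^^ n) (x + y)) has_sum (B x + B y)) UNIV" for x y
    by (simp add: clinear_add[OF clinear_funpow[OF clinear_A]] scaleR_add_right)
  then have "B (x + y) = B x + B y" for x y
    using sqrt_series_has_sum has_sum_unique by blast
  moreover have "((\<lambda>n. a *\<^sub>C (sqrt_coeff n *\<^sub>R (A ^^ n) x)) has_sum (a *\<^sub>C B x)) UNIV" for a x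
    by (rule has_sum_bounded_linear[OF bounded_linear_scaleC sqrt_series_has_sum])
  then have "((\<lambda>n. sqrt_coeff n *\<^sub>R (A ^^ n) (a *\<^sub>C x)) has_sum (a *\<^sub>C B x)) UNIV" for a x
    by (simp add: clinear_scaleC[OF clinear_funpow[OF clinear_A]] scaleR_scaleC_commute)
  then have "B (a *\<^sub>C x) = a *\<^sub>C B x" for a x
    using sqrt_series_has_sum has_sum_unique by blast
  ultimately show ?thesis unfolding clinear_def by blast
qed

lemma norm_B_le: "norm (B x) \<le> norm x"
proof -
  have "norm (B x) \<le> infsum (\<lambda>n. norm (sqrt_coeff n *\<^sub>R (A ^^ n) x)) UNIV"
    unfolding sqrt_series_def by (rule norm_infsum_bound[OF sqrt_series_terms_abs_summable])
  also have "\<dots> \<le> infsum (\<lambda>n. sqrt_coeff n * norm x) UNIV"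
  proof (rule infsum_mono)
    show "(\<lambda>n. sqrt_coeff n * norm x) summable_on UNIV"
      by (rule summable_on_cmult_left[OF sqrt_coeff_summable])
    show "norm (sqrt_coeff n *\<^sub>R (A ^^ n) x) \<le> sqrt_coeff n * norm x" for n
      using sqrt_coeff_nonneg[of n] norm_A_power_le[of n x] by (simp add: mult_left_mono)
  qed (rule sqrt_series_terms_abs_summable)
  also have "\<dots> = infsum sqrt_coeff UNIV * norm x"
    by (rule infsum_cmult_left) (simp add: sqrt_coeff_summable)
  also have "\<dots> \<le> norm x" using sqrt_coeff_infsum_le mult_right_mono[of _ 1 "norm x"] by simp
  finally show ?thesis .
qed

lemma cinner_B_self_Im: "Im (cinner x (B x)) = 0"
  and cinner_B_self_le: "Re (cinner x (B x)) \<le> (norm x)\<^sup>2"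
proof -
  have sum: "((\<lambda>n. cinner x (sqrt_coeff n *\<^sub>R (A ^^ n) x)) has_sum cinner x (B x)) UNIV"
    by (rule has_sum_bounded_linear[OF bounded_linear_cinner_right sqrt_series_has_sum])
  have "((\<lambda>n. Im (cinner x (sqrt_coeff n *\<^sub>R (A ^^ n) x))) has_sum Im (cinner x (B x))) UNIV"
    by (rule has_sum_bounded_linear[OF bounded_linear_Im sum])
  moreover have "((\<lambda>n. Im (cinner x (sqrt_coeff n *\<^sub>R (A ^^ n) x))) has_sum 0) UNIV"
    by (rule has_sum_0) (simp add: cinner_scaleR_right cinner_A_power_self_Im)
  ultimately show "Im (cinner x (B x)) = 0" by (rule has_sum_unique)
  have "Re (cinner x (B x)) \<le> norm x * norm (B x)"
    using complex_Re_le_cmod norm_cinner_le order_trans by blast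
  also have "\<dots> \<le> (norm x)\<^sup>2"
    using mult_left_mono[OF norm_B_le[of x], of "norm x"] by (simp add: power2_eq_square)
  finally show "Re (cinner x (B x)) \<le> (norm x)\<^sup>2" .
qed

lemma sqrt_series_product_abs_summable:
  "(\<lambda>(i,j). (sqrt_coeff i * sqrt_coeff j) *\<^sub>R (A ^^ (i + j)) x) abs_summable_on UNIV \<times> UNIV"
proof -
  define f where "f = (\<lambda>(i,j). (sqrt_coeff i * sqrt_coeff j) *\<^sub>R (A ^^ (i + j)) x)"
  have f_le: "norm (f (i,j)) \<le> sqrt_coeff i * norm x * sqrt_coeff j" for i j
    unfolding f_def using sqrt_coeff_nonneg[of i] sqrt_coeff_nonneg[of j]
      mult_left_mono[OF norm_A_power_le[of "i + j" x], of "sqrt_coeff i * sqrt_coeff j"]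
    by (simp add: abs_mult mult_ac)
  have rows: "(\<lambda>j. norm (f (i,j))) summable_on UNIV" for i
    by (rule Infinite_Sum.abs_summable_on_comparison_test'[of "\<lambda>j. sqrt_coeff i * norm x * sqrt_coeff j"])
       (auto intro: summable_on_cmult_right[OF sqrt_coeff_summable] f_le)
  have row_sum_le: "infsum (\<lambda>j. norm (f (i,j))) UNIV \<le> sqrt_coeff i * norm x" for i
  proof -
    have "infsum (\<lambda>j. norm (f (i,j))) UNIV \<le> infsum (\<lambda>j. sqrt_coeff i * norm x * sqrt_coeff j) UNIV"
      by (rule infsum_mono[OF rows summable_on_cmult_right[OF sqrt_coeff_summable] f_le])
    also have "\<dots> = sqrt_coeff i * norm x * infsum sqrt_coeff UNIV"
      by (rule infsum_cmult_right) (simp add: sqrt_coeff_summable)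
    also have "\<dots> \<le> sqrt_coeff i * norm x"
      using sqrt_coeff_nonneg[of i] sqrt_coeff_infsum_le by (simp add: mult_left_le)
    finally show ?thesis .
  qed
  have "(\<lambda>i. norm (infsum (\<lambda>j. norm (f (i,j))) UNIV)) summable_on UNIV"
  proof (rule Infinite_Sum.abs_summable_on_comparison_test'[of "\<lambda>i. sqrt_coeff i * norm x"])
    show "(\<lambda>i. sqrt_coeff i * norm x) summable_on UNIV"
      by (rule summable_on_cmult_left[OF sqrt_coeff_summable])
    show "norm (infsum (\<lambda>j. norm (f (i,j))) UNIV) \<le> sqrt_coeff i * norm x" for i
      using row_sum_le[of i] infsum_nonneg[of UNIV "\<lambda>j. norm (f (i,j))"] by simp
  qed
  then have "f abs_summable_on UNIV \<times> UNIV"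
    using Infinite_Sum.abs_summable_on_Sigma_iff[of f UNIV "\<lambda>_. UNIV"] rows by auto
  then show ?thesis unfolding f_def .
qed

lemma B_B_eq_product_sum:
  "B (B x) = infsum (\<lambda>(i,j). (sqrt_coeff i * sqrt_coeff j) *\<^sub>R (A ^^ (i + j)) x) (UNIV \<times> UNIV)"
proof -
  have row: "((\<lambda>j. (sqrt_coeff i * sqrt_coeff j) *\<^sub>R (A ^^ (i + j)) x)
      has_sum (sqrt_coeff i *\<^sub>R (A ^^ i) (B x))) UNIV" for i
  proof -
    have "bounded_linear (\<lambda>v. sqrt_coeff i *\<^sub>R (A ^^ i) v)"
      by (rule bounded_linear_compose[OF bounded_linear_scaleR_right bounded_linear_A_power])
    from has_sum_bounded_linear[OF this sqrt_series_has_sum[of x]] show ?thesis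
      by (simp add: clinear_scaleR[OF clinear_funpow[OF clinear_A]] funpow_add)
  qed
  have "infsum (\<lambda>(i,j). (sqrt_coeff i * sqrt_coeff j) *\<^sub>R (A ^^ (i + j)) x) (UNIV \<times> UNIV) =
      infsum (\<lambda>i. infsum (\<lambda>j. (sqrt_coeff i * sqrt_coeff j) *\<^sub>R (A ^^ (i + j)) x) UNIV) UNIV"
    using infsum_Sigma_banach[OF abs_summable_summable[OF sqrt_series_product_abs_summable]]
    by simp
  also have "\<dots> = infsum (\<lambda>i. sqrt_coeff i *\<^sub>R (A ^^ i) (B x)) UNIV"
    using row by (intro infsum_cong infsumI) auto
  finally show ?thesis by (simp add: sqrt_series_def)
qed

text \<open>Summing the product family along the diagonals \<open>i + j = n\<close> turns
  \<open>sqrt_coeff_convolution\<close> into the operator identity \<open>B\<^sup>2 = 2B - A\<close>.\<close>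

lemma B_B: "B (B x) = 2 *\<^sub>R B x - A x"
proof -
  define f where "f = (\<lambda>(i,j). (sqrt_coeff i * sqrt_coeff j) *\<^sub>R (A ^^ (i + j)) x)"
  define D where "D = Sigma (UNIV::nat set) (\<lambda>n. {..n})"
  have diagonals: "((\<lambda>(n,i). f (i, n - i)) has_sum s) D \<longleftrightarrow> (f has_sum s) (UNIV \<times> UNIV)" for s
    unfolding D_def
    by (rule has_sum_reindex_bij_witness[where j="\<lambda>(n,i). (i, n - i)" and i="\<lambda>(a,b). (a + b, a)"])
       auto
  have "(f has_sum B (B x)) (UNIV \<times> UNIV)"
    using has_sum_infsum[OF abs_summable_summable[OF sqrt_series_product_abs_summable]]
    unfolding f_def B_B_eq_product_sum .
  then have diagonal_sum: "((\<lambda>(n,i). f (i, n - i)) has_sum B (B x)) D"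
    using diagonals by blast
  have one: "((\<lambda>n. (if n = 1 then 1 else 0) *\<^sub>R (A ^^ n) x) has_sum A x) UNIV"
  proof -
    have "((\<lambda>n. (if n = 1 then 1 else 0) *\<^sub>R (A ^^ n) x) has_sum A x) {1}"
      using has_sum_finite[of "{1::nat}" "\<lambda>n. (if n = 1 then 1 else 0) *\<^sub>R (A ^^ n) x"] by simp
    then show ?thesis by (subst has_sum_cong_neutral[where T = "{1}"]) auto
  qed
  have "B (B x) = infsum (\<lambda>(n,i). f (i, n - i)) D"
    using diagonal_sum by (rule infsumI[symmetric])
  also have "\<dots> = infsum (\<lambda>n. infsum (\<lambda>i. f (i, n - i)) {..n}) UNIV"
    unfolding D_def using diagonal_sum infsum_Sigma_banach unfolding D_def summable_on_def
    by fastforce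
  also have "\<dots> = infsum (\<lambda>n. 2 *\<^sub>R (sqrt_coeff n *\<^sub>R (A ^^ n) x)
      - (if n = 1 then 1 else 0) *\<^sub>R (A ^^ n) x) UNIV"
    by (intro infsum_cong)
       (simp add: f_def scaleR_sum_left[symmetric] sqrt_coeff_convolution algebra_simps)
  also have "\<dots> = 2 *\<^sub>R B x - A x"
    by (intro infsumI has_sum_diff has_sum_scaleR sqrt_series_has_sum one)
  finally show ?thesis .
qed

lemma clinear_Q: "clinear Q"
  using clinear_B unfolding clinear_def sqrt_op_def
  by (auto simp: scaleC_diff_right scaleR_scaleC_commute algebra_simps)

lemma bounded_clinear_Q: "bounded_clinear Q"
proof -
  have "norm (Q x) \<le> norm x * (2 * sqrt c)" for x
  proof -
    have "norm (Q x) \<le> sqrt c * (norm x + norm (B x))"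
      unfolding sqrt_op_def using c_pos by (simp add: mult_left_mono norm_triangle_ineq4)
    also have "\<dots> \<le> sqrt c * (norm x + norm x)"
      using c_pos norm_B_le by (intro mult_left_mono add_left_mono) auto
    finally show ?thesis by (simp add: mult_ac)
  qed
  then show ?thesis using clinear_Q unfolding bounded_clinear_def by blast
qed

lemma op_pos_Q: "op_pos Q"
proof -
  have "cinner x (Q x) = complex_of_real (sqrt c) * (cinner x x - cinner x (B x))" for x
    by (simp add: sqrt_op_def cinner_scaleR_right cinner_diff_right)
  then have "cnonneg (cinner x (Q x))" for x
    unfolding cnonneg_def using cinner_B_self_Im[of x] cinner_B_self_le[of x] c_pos
    by (simp add: Im_cinner_self Re_cinner_self)
  then show ?thesis using bounded_clinear_Q unfolding op_pos_def by blast
qed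

lemma Q_Q: "Q (Q x) = P x"
proof -
  have "Q (Q x) = (sqrt c * sqrt c) *\<^sub>R ((x - B x) - (B x - B (B x)))"
    by (simp add: sqrt_op_def clinear_diff[OF clinear_B] clinear_scaleR[OF clinear_B]
        scaleR_diff_right)
  also have "(x - B x) - (B x - B (B x)) = (1/c) *\<^sub>R P x"
    by (simp add: B_B sqrt_shift_def scaleR_2 algebra_simps)
  finally show ?thesis using c_pos by simp
qed

end

lemma bounded_pos_op_mono: "bounded_pos_op P c \<Longrightarrow> c \<le> d \<Longrightarrow> bounded_pos_op P d"
  unfolding bounded_pos_op_def by (meson order.trans mult_right_mono norm_ge_zero less_le_trans)

lemma op_pos_imp_bounded_pos_op: "op_pos P \<Longrightarrow> \<exists>c. bounded_pos_op P c"
  using bounded_clinear_pos_bound[of P] unfolding bounded_pos_op_def op_pos_def by blast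

lemma sqrt_op_intertwine:
  assumes "bounded_pos_op P1 c" "bounded_pos_op P2 c" "bounded_clinear Y"
    and intertwine: "\<And>x. Y (P1 x) = P2 (Y x)"
  shows "Y (sqrt_op c P1 x) = sqrt_op c P2 (Y x)"
proof -
  interpret P1: bounded_pos_op P1 c by fact
  interpret P2: bounded_pos_op P2 c by fact
  have Y: "clinear Y" using assms(3) by (rule bounded_clinear_imp_clinear)
  have "Y (sqrt_shift c P1 z) = sqrt_shift c P2 (Y z)" for z
    unfolding sqrt_shift_def by (simp add: clinear_diff[OF Y] clinear_scaleR[OF Y] intertwine)
  then have "Y ((sqrt_shift c P1 ^^ n) z) = (sqrt_shift c P2 ^^ n) (Y z)" for n z
    by (induction n) simp_all
  moreover have "((\<lambda>n. Y (sqrt_coeff n *\<^sub>R (sqrt_shift c P1 ^^ n) x)) has_sum Y (sqrt_series c P1 x)) UNIV"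
    by (rule has_sum_bounded_linear[OF bounded_clinear_imp_bounded_linear[OF assms(3)]
          P1.sqrt_series_has_sum])
  ultimately have "((\<lambda>n. sqrt_coeff n *\<^sub>R (sqrt_shift c P2 ^^ n) (Y x)) has_sum Y (sqrt_series c P1 x)) UNIV"
    by (simp add: clinear_scaleR[OF Y])
  then have "Y (sqrt_series c P1 x) = sqrt_series c P2 (Y x)"
    using P2.sqrt_series_has_sum by (rule has_sum_unique)
  then show ?thesis unfolding sqrt_op_def by (simp add: clinear_scaleR[OF Y] clinear_diff[OF Y])
qed

context bounded_pos_op
begin

lemma positive_sqrt_unique:
  assumes R: "op_pos R" and R_R: "\<And>x. R (R x) = P x"
  shows "R y = Q y"
proof -
  have bounded_R: "bounded_clinear R" using R by (simp add: op_pos_def)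
  then have clinear_R: "clinear R" by (rule bounded_clinear_imp_clinear)
  have "R (P x) = P (R x)" for x using R_R[of "R x"] R_R[of x] by simp
  then have R_Q: "R (Q x) = Q (R x)" for x
    by (rule sqrt_op_intertwine[OF bounded_pos_op_axioms bounded_pos_op_axioms bounded_R])
  define D where "D z = R z - Q z" for z
  have clinear_D: "clinear D"
    unfolding clinear_def D_def
    by (simp add: clinear_add[OF clinear_R] clinear_add[OF clinear_Q] clinear_scaleC[OF clinear_R]
        clinear_scaleC[OF clinear_Q] scaleC_diff_right)
  have herm: "cinner u (D v) = cinner (D u) v" for u v
    unfolding D_def by (simp add: cinner_diff_right cinner_diff_left op_pos_hermitian[OF R]
        op_pos_hermitian[OF op_pos_Q])
  text \<open>\<open>R D + Q D = R\<^sup>2 - Q\<^sup>2 = 0\<close>, as \<open>R\<close> and \<open>Q\<close> commute; sandwiching by \<open>D\<close> gives two positive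
    operators with sum zero.\<close>
  have "R (D z) + Q (D z) = 0" for z
    unfolding D_def by (simp add: clinear_diff[OF clinear_R] clinear_diff[OF clinear_Q] R_R Q_Q R_Q)
  then have sum_zero: "D (R (D z)) + D (Q (D z)) = 0" for z
    by (simp add: clinear_add[OF clinear_D, symmetric] clinear_zero[OF clinear_D])
  have positive_R: "cnonneg (cinner z (D (R (D z))))" for z
    using R herm[of z "R (D z)"] unfolding op_pos_def by simp
  have positive_Q: "cnonneg (cinner z (D (Q (D z))))" for z
    using op_pos_Q herm[of z "Q (D z)"] unfolding op_pos_def by simp
  have clinear_DRD: "clinear (\<lambda>z. D (R (D z)))" and clinear_DQD: "clinear (\<lambda>z. D (Q (D z)))"
    using clinear_compose[OF clinear_D clinear_compose[OF clinear_R clinear_D]]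
      clinear_compose[OF clinear_D clinear_compose[OF clinear_Q clinear_D]]
    by (simp_all add: comp_def)
  have "D (R (D v)) = 0" for v
    by (rule positive_forms_sum_zero[OF clinear_DRD clinear_DQD positive_R positive_Q sum_zero])
  moreover have "D (Q (D v)) = 0" for v
    using sum_zero
    by (intro positive_forms_sum_zero[OF clinear_DQD clinear_DRD positive_Q positive_R])
       (simp add: add.commute)
  moreover have "D (D (D v)) = D (R (D v)) - D (Q (D v))" for v
  proof -
    have "D (D v) = R (D v) - Q (D v)" by (simp add: D_def)
    then show ?thesis by (simp add: clinear_diff[OF clinear_D])
  qed
  ultimately have "D y = 0" using hermitian_cube_zero[OF herm] by (metis diff_zero)
  then show ?thesis by (simp add: D_def)
qed

lemma op_sqrt_eq_sqrt_op: "op_sqrt P = Q"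
  unfolding op_sqrt_def
proof (rule the_equality)
  show "op_pos Q \<and> Q \<circ> Q = P" using op_pos_Q Q_Q by (auto simp: fun_eq_iff)
  show "R = Q" if "op_pos R \<and> R \<circ> R = P" for R
    using that positive_sqrt_unique[of R] by (auto simp: fun_eq_iff)
qed

end

lemma op_sqrt_square:
  assumes "op_pos P"
  shows "op_sqrt P (op_sqrt P x) = P x"
proof -
  obtain c where "bounded_pos_op P c" using op_pos_imp_bounded_pos_op[OF assms] by blast
  then interpret bounded_pos_op P c .
  show ?thesis by (simp add: op_sqrt_eq_sqrt_op Q_Q)
qed

lemma op_sqrt_intertwine:
  assumes "op_pos P1" "op_pos P2" "bounded_clinear Y" "\<And>x. Y (P1 x) = P2 (Y x)"
  shows "Y (op_sqrt P1 x) = op_sqrt P2 (Y x)"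
proof -
  obtain c1 c2 where "bounded_pos_op P1 c1" "bounded_pos_op P2 c2"
    using op_pos_imp_bounded_pos_op assms(1,2) by metis
  then have P1: "bounded_pos_op P1 (max c1 c2)" and P2: "bounded_pos_op P2 (max c1 c2)"
    by (auto intro: bounded_pos_op_mono)
  show ?thesis
    using sqrt_op_intertwine[OF P1 P2 assms(3,4)]
    by (simp add: bounded_pos_op.op_sqrt_eq_sqrt_op[OF P1] bounded_pos_op.op_sqrt_eq_sqrt_op[OF P2])
qed

section \<open>Completely positive maps from representations\<close>

lemma cproj_eq_self:
  assumes "k \<in> M"
  shows "cproj M (k::'a::chilbert) = k"
  unfolding cproj_def
proof (rule the_equality)
  show "k \<in> M \<and> (\<forall>u\<in>M. cinner u (k - k) = 0)" using assms by simp
  fix m assume m: "m \<in> M \<and> (\<forall>u\<in>M. cinner u (k - m) = 0)"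
  then have "cinner (k - m) (k - m) = 0" using assms by (simp add: cinner_diff_left)
  then show "m = k" by (simp add: cinner_self_eq_0)
qed

lemma cp_map_compression:
  fixes \<pi> :: "'a::cstar_algebra \<Rightarrow> 'k::chilbert \<Rightarrow> 'k" and W :: "'h::chilbert \<Rightarrow> 'k"
  assumes \<pi>: "star_rep \<pi>" and W: "bounded_clinear W"
  shows "cp_map (\<lambda>a. cadj W \<circ> \<pi> a \<circ> W)"
  unfolding cp_map_def
proof (intro conjI allI impI)
  have \<pi>_bounded: "bounded_clinear (\<pi> a)" and \<pi>_linear: "clinear (\<lambda>a. \<pi> a h)"
    and \<pi>_mult: "\<pi> (a * b) = \<pi> a \<circ> \<pi> b" and \<pi>_star: "\<pi> (cstar a) = cadj (\<pi> a)" for a b h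
    using \<pi> by (simp_all add: star_rep_def)
  have cadj_W: "bounded_clinear (cadj W)" by (rule bounded_clinear_cadj[OF W])
  show "clinear (\<lambda>a. (cadj W \<circ> \<pi> a \<circ> W) h)" for h
    using clinear_compose[OF bounded_clinear_imp_clinear[OF cadj_W] \<pi>_linear[of "W h"]]
    by (simp add: comp_def)
  show "bounded_clinear (cadj W \<circ> \<pi> a \<circ> W)" for a
    by (intro bounded_clinear_compose cadj_W \<pi>_bounded W)
  fix n and M :: "nat \<Rightarrow> nat \<Rightarrow> 'a" and h :: "nat \<Rightarrow> 'h"
  assume "mat_pos n M"
  then obtain C where C: "\<And>i j. i < n \<Longrightarrow> j < n \<Longrightarrow> M i j = (\<Sum>k<n. cstar (C k i) * C k j)"
    unfolding mat_pos_def by blast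
  define u where "u k = (\<Sum>j<n. \<pi> (C k j) (W (h j)))" for k
  text \<open>With \<open>M = C\<^sup>* C\<close> the quadratic form is \<open>\<Sum>\<^sub>k \<parallel>\<Sum>\<^sub>j \<pi>(C\<^sub>k\<^sub>j) W h\<^sub>j\<parallel>\<^sup>2\<close>.\<close>
  have "cinner (h i) ((cadj W \<circ> \<pi> (M i j) \<circ> W) (h j)) =
      (\<Sum>k<n. cinner (\<pi> (C k i) (W (h i))) (\<pi> (C k j) (W (h j))))" if "i < n" "j < n" for i j
  proof -
    have "cinner (h i) ((cadj W \<circ> \<pi> (M i j) \<circ> W) (h j)) = cinner (W (h i)) (\<pi> (M i j) (W (h j)))"
      by (simp add: cinner_cadj[OF W])
    also have "\<pi> (M i j) (W (h j)) = (\<Sum>k<n. \<pi> (cstar (C k i) * C k j) (W (h j)))"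
      using C[OF that] by (simp add: clinear_sum[OF \<pi>_linear])
    also have "\<dots> = (\<Sum>k<n. cadj (\<pi> (C k i)) (\<pi> (C k j) (W (h j))))"
      by (simp add: \<pi>_mult \<pi>_star)
    finally show ?thesis by (simp add: cinner_sum_right cinner_cadj[OF \<pi>_bounded])
  qed
  then have "(\<Sum>i<n. \<Sum>j<n. cinner (h i) ((cadj W \<circ> \<pi> (M i j) \<circ> W) (h j))) =
      (\<Sum>i<n. \<Sum>j<n. \<Sum>k<n. cinner (\<pi> (C k i) (W (h i))) (\<pi> (C k j) (W (h j))))"
    by (intro sum.cong refl) simp
  also have "\<dots> = (\<Sum>i<n. \<Sum>k<n. \<Sum>j<n. cinner (\<pi> (C k i) (W (h i))) (\<pi> (C k j) (W (h j))))"
    by (rule sum.cong[OF refl], rule sum.swap)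
  also have "\<dots> = (\<Sum>k<n. \<Sum>i<n. \<Sum>j<n. cinner (\<pi> (C k i) (W (h i))) (\<pi> (C k j) (W (h j))))"
    by (rule sum.swap)
  also have "\<dots> = (\<Sum>k<n. cinner (u k) (u k))"
    unfolding u_def cinner_sum_left cinner_sum_right by (rule sum.cong[OF refl], rule sum.swap)
  finally show "cnonneg (\<Sum>i<n. \<Sum>j<n. cinner (h i) ((cadj W \<circ> \<pi> (M i j) \<circ> W) (h j)))"
    by (simp add: cnonneg_sum cnonneg_cinner_self)
qed

lemma cp_module_map_with_compose:
  assumes "\<And>x. bounded_clinear (\<pi> x)" and "\<And>x y. cadj (\<pi> x) \<circ> \<pi> y = \<rho> (hinner x y)"
    and "star_rep \<rho>" and "bounded_clinear W"
  shows "cp_module_map_with hinner (\<lambda>x. \<pi> x \<circ> W) (\<lambda>a. cadj W \<circ> \<rho> a \<circ> W)"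
  unfolding cp_module_map_with_def
proof (intro conjI allI)
  show "bounded_clinear (\<pi> x \<circ> W)" for x by (intro bounded_clinear_compose assms)
  show "cp_map (\<lambda>a. cadj W \<circ> \<rho> a \<circ> W)" by (rule cp_map_compression[OF assms(3,4)])
  show "cadj (\<pi> x \<circ> W) \<circ> (\<pi> y \<circ> W) = cadj W \<circ> \<rho> (hinner x y) \<circ> W" for x y
  proof -
    have "cadj (\<pi> x \<circ> W) \<circ> (\<pi> y \<circ> W) = cadj W \<circ> (cadj (\<pi> x) \<circ> \<pi> y) \<circ> W"
      by (simp add: cadj_comp assms(1,4) comp_assoc)
    then show ?thesis by (simp only: assms(2))
  qed
qed

theorem lemma2p10:
  fixes rmul :: "'x::complex_vector \<Rightarrow> 'a::cstar_algebra \<Rightarrow> 'x"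
    and hinner :: "'x \<Rightarrow> 'x \<Rightarrow> 'a"
    and \<Phi> :: "'x \<Rightarrow> 'h::chilbert \<Rightarrow> 'k::chilbert"
    and \<phi> :: "'a \<Rightarrow> 'h \<Rightarrow> 'h"
    and \<pi>\<phi> :: "'a \<Rightarrow> 'hp::chilbert \<Rightarrow> 'hp"
    and V :: "'h \<Rightarrow> 'hp"
    and K\<Phi> :: "'k set"
    and \<pi>\<Phi> :: "'x \<Rightarrow> 'hp \<Rightarrow> 'k"
    and T :: "'hp \<Rightarrow> 'hp"
    and S :: "'k \<Rightarrow> 'k"
  assumes "hilbert_module rmul hinner"
    and "full_module hinner"
    and "cp_module_map_with hinner \<Phi> \<phi>"
    and "stinespring_construction rmul hinner \<Phi> \<phi> \<pi>\<phi> V K\<Phi> \<pi>\<Phi>"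
    and "op_pos T"
    and "op_pos S"
    and "\<forall>k. S k = cproj K\<Phi> (S (cproj K\<Phi> k))"
    and "\<forall>x. \<pi>\<Phi> x \<circ> T = S \<circ> \<pi>\<Phi> x"
    and "\<forall>x. cadj (\<pi>\<Phi> x) \<circ> S = T \<circ> cadj (\<pi>\<Phi> x)"
  shows "cp_module_map hinner (\<lambda>x. cproj K\<Phi> \<circ> op_sqrt S \<circ> \<pi>\<Phi> x \<circ> op_sqrt T \<circ> V)"
proof -
  note stinespring = assms(4)[unfolded stinespring_construction_def min_stinespring_def]
  have \<pi>\<Phi>_bounded: "bounded_clinear (\<pi>\<Phi> x)" and \<pi>\<Phi>_range: "\<pi>\<Phi> x k \<in> K\<Phi>" for x k
    using stinespring by blast+
  have intertwine: "\<pi>\<Phi> x (op_sqrt T h) = op_sqrt S (\<pi>\<Phi> x h)" for x h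
    using op_sqrt_intertwine[OF assms(5,6) \<pi>\<Phi>_bounded] assms(8) by (metis comp_apply)
  have "cproj K\<Phi> (op_sqrt S (\<pi>\<Phi> x (op_sqrt T (V h)))) = \<pi>\<Phi> x (T (V h))" for x h
    using cproj_eq_self[OF \<pi>\<Phi>_range] op_sqrt_square[OF assms(5)] by (simp flip: intertwine)
  then have "cproj K\<Phi> \<circ> op_sqrt S \<circ> \<pi>\<Phi> x \<circ> op_sqrt T \<circ> V = \<pi>\<Phi> x \<circ> (T \<circ> V)" for x
    by (simp add: fun_eq_iff)
  moreover have "cp_module_map_with hinner (\<lambda>x. \<pi>\<Phi> x \<circ> (T \<circ> V))
      (\<lambda>a. cadj (T \<circ> V) \<circ> \<pi>\<phi> a \<circ> (T \<circ> V))"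
    using stinespring assms(5) unfolding op_pos_def
    by (intro cp_module_map_with_compose bounded_clinear_compose) blast+
  ultimately show ?thesis unfolding cp_module_map_def by auto
qed

end
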